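(* Let $\alpha\in\mathbb T$ and let $\mathcal V_\alpha:L^2(\mu)\to L^2(\mu_\alpha)$ be a unitary operator with $\mathcal V_\alpha U_\alpha=M_z\mathcal V_\alpha$ and $\mathcal V_\alpha\mathbf 1=\mathbf 1$. Then for all $f\in C^1(\mathbb T)$, $$\mathcal V_\alpha f(z)=f(z)+(1-\alpha)\int_{\mathbb T}\frac{f(\xi)-f(z)}{1-\overline\xi z}\,d\mu(\xi)\qquad(\mu_\alpha\text{-a.e. }z),$$ where the integrand at $\xi=z$ is defined by continuity.
   Context: $\mathbb T=\{z\in\mathbb C:|z|=1\}$. Let $\mu$ be a Borel probability measure on $\mathbb T$, $U=M_\xi$ multiplication by the independent variable $\xi$ on $L^2(\mu)$, $b=\mathbf 1$ and $b_1=U^*b$ (so $b_1(\xi)=\overline\xi$). For $\alpha\in\mathbb C$ put $U_\alpha=U+(\alpha-1)(\,\cdot\,,b_1)_{L^2(\mu)}b$, i.e. $(U_\alpha f)(\xi)=\xi f(\xi)+(\alpha-1)\int_{\mathbb T}f(\zeta)\zeta\,d\mu(\zeta)$. For $\alpha\in\mathbb T$, $U_\alpha$ is unitary with $*$-cyclic vector $b$, and $\mu_\alpha$ denotes its spectral measure with respect to $b$, i.e. the probability measure on $\mathbb T$ with $\int_{\mathbb T}z^n\,d\mu_\alpha(z)=(U_\alpha^nb,b)_{L^2(\mu)}$ for all $n\in\mathbb Z$. $M_z$ denotes multiplication by the independent variable $z$ on $L^2(\mu_\alpha)$. *)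

theory Defs
  imports "HOL-Analysis.Analysis" "HOL-Probability.Probability"
begin

definition circle_measure :: "complex measure \<Rightarrow> bool" where
  "circle_measure M \<longleftrightarrow> prob_space M \<and> sets M = sets (restrict_space borel (sphere (0::complex) 1))"

text \<open>Representatives of elements of L2(M).\<close>
definition L2 :: "complex measure \<Rightarrow> (complex \<Rightarrow> complex) \<Rightarrow> bool" where
  "L2 M f \<longleftrightarrow> f \<in> borel_measurable M \<and> integrable M (\<lambda>x. (norm (f x))\<^sup>2)"

definition L2_inner :: "complex measure \<Rightarrow> (complex \<Rightarrow> complex) \<Rightarrow> (complex \<Rightarrow> complex) \<Rightarrow> complex" where
  "L2_inner M f g = (LINT x|M. f x * cnj (g x))"

text \<open>The rank-one perturbation U_alpha f = U f + (alpha - 1) (f, b1) b, with b = 1, b1(xi) = cnj xi.\<close>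
definition U_alpha :: "complex measure \<Rightarrow> complex \<Rightarrow> (complex \<Rightarrow> complex) \<Rightarrow> (complex \<Rightarrow> complex)" where
  "U_alpha M \<alpha> f = (\<lambda>\<xi>. \<xi> * f \<xi> + (\<alpha> - 1) * (LINT \<zeta>|M. f \<zeta> * \<zeta>))"

definition unitary_L2 :: "complex measure \<Rightarrow> complex measure \<Rightarrow> ((complex \<Rightarrow> complex) \<Rightarrow> (complex \<Rightarrow> complex)) \<Rightarrow> bool" where
  "unitary_L2 M N V \<longleftrightarrow>
     (\<forall>f. L2 M f \<longrightarrow> L2 N (V f)) \<and>
     (\<forall>f g. L2 M f \<longrightarrow> L2 M g \<longrightarrow> (AE x in M. f x = g x) \<longrightarrow> (AE z in N. V f z = V g z)) \<and>
     (\<forall>f g a b. L2 M f \<longrightarrow> L2 M g \<longrightarrow>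
        (AE z in N. V (\<lambda>x. a * f x + b * g x) z = a * V f z + b * V g z)) \<and>
     (\<forall>f g. L2 M f \<longrightarrow> L2 M g \<longrightarrow> L2_inner N (V f) (V g) = L2_inner M f g) \<and>
     (\<forall>h. L2 N h \<longrightarrow> (\<exists>f. L2 M f \<and> (AE z in N. V f z = h z)))"

definition dq :: "(complex \<Rightarrow> complex) \<Rightarrow> complex \<Rightarrow> complex \<Rightarrow> complex" where
  "dq f z \<xi> = (if \<xi> = z then Lim (at z within sphere 0 1) (\<lambda>w. (f w - f z) / (1 - cnj w * z))
               else (f \<xi> - f z) / (1 - cnj \<xi> * z))"

definition C1_circle :: "(complex \<Rightarrow> complex) \<Rightarrow> bool" where
  "C1_circle f \<longleftrightarrow> (\<lambda>t. f (cis t)) C1_differentiable_on UNIV"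

end

theory Submission
  imports Defs
begin

text \<open>Both sides of the identity are linear in \<open>f\<close>, and both transform in the same way under
  \<open>f \<mapsto> \<xi> f\<close>: since \<open>\<xi> h = U\<^sub>\<alpha> h + (1 - \<alpha>) (h, b\<^sub>1) 1\<close>, the intertwining relation and
  \<open>V\<^sub>\<alpha> 1 = 1\<close> give \<open>V\<^sub>\<alpha>(\<xi> h) = z V\<^sub>\<alpha> h + (1 - \<alpha>) (h, b\<^sub>1)\<close>, and a direct computation with the
  difference quotient shows the same recursion for the right-hand side. Starting from the constant
  \<open>1\<close> and shifting in both directions, the formula holds for all Laurent polynomials.
  A \<open>C\<^sup>1\<close> function \<open>f\<close> is approximated by Laurent polynomials \<open>L\<^sub>k\<close> such that \<open>f - L\<^sub>k\<close> and its
  derivative are uniformly \<open>O(2\<^sup>-\<^sup>k)\<close>. The right-hand side of the formula applied to \<open>f - L\<^sub>k\<close> is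
  bounded by these two norms, since the difference quotient is bounded by the derivative; and
  \<open>V\<^sub>\<alpha>(f - L\<^sub>k) \<rightarrow> 0\<close> almost everywhere because \<open>\<Sum>\<^sub>k \<parallel>V\<^sub>\<alpha>(f - L\<^sub>k)\<parallel>\<^sup>2 < \<infinity>\<close>.\<close>

abbreviation unit_circle :: "complex set" where
  "unit_circle \<equiv> sphere 0 1"

lemma unit_circle_cnj_mult: "w \<in> unit_circle \<Longrightarrow> cnj w * w = 1"
  using complex_norm_square[of w] by (simp add: mult.commute)

lemma unit_circle_cnj_eq_inverse: "w \<in> unit_circle \<Longrightarrow> cnj w = inverse w"
  by (metis inverse_unique mult.commute unit_circle_cnj_mult)

lemma cis_Arg_unit_circle: "w \<in> unit_circle \<Longrightarrow> cis (Arg w) = w"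
  by (cases "w = 0") (auto simp: cis_Arg sgn_div_norm)

lemma at_within_unit_circle_nontrivial:
  assumes "z \<in> unit_circle"
  shows "at z within unit_circle \<noteq> bot"
proof -
  have "unit_circle \<noteq> {x}" for x
  proof
    assume "unit_circle = {x}"
    moreover have "1 \<in> unit_circle" "-1 \<in> unit_circle"
      by simp_all
    ultimately have "(1::complex) = x" "(-1::complex) = x"
      by blast+
    then show False
      by simp
  qed
  then have "z islimpt unit_circle"
    by (intro connected_imp_perfect[OF connected_sphere assms]) auto
  then show ?thesis
    using trivial_limit_within by blast
qed

lemma unit_circle_polar:
  assumes w: "w \<in> unit_circle" and z: "z \<in> unit_circle"
  shows "cis (Arg z + Arg (w / z)) = w" and "cnj w * z = cis (- Arg (w / z))"
proof -
  have wz: "w / z \<in> unit_circle"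
    using w z by (simp add: norm_divide)
  show e: "cis (Arg z + Arg (w / z)) = w"
    using cis_Arg_unit_circle[OF z] cis_Arg_unit_circle[OF wz] z by (auto simp: cis_mult[symmetric])
  have "cnj w * z = cnj (cis (Arg z + Arg (w / z))) * cis (Arg z)"
    using e cis_Arg_unit_circle[OF z] by simp
  also have "\<dots> = cis (- Arg (w / z))"
    by (simp add: cis_cnj cis_mult)
  finally show "cnj w * z = cis (- Arg (w / z))" .
qed

lemma Arg_divide_nonzero:
  assumes "w \<in> unit_circle" "z \<in> unit_circle" "w \<noteq> z"
  shows "Arg (w / z) \<noteq> 0"
proof
  assume "Arg (w / z) = 0"
  then have "w = z"
    using unit_circle_polar(1)[OF assms(1,2)] cis_Arg_unit_circle[OF assms(2)] by simp
  with assms(3) show False ..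
qed

lemma one_minus_cnj_mult_nonzero:
  assumes "\<xi> \<in> unit_circle" "z \<in> unit_circle" "\<xi> \<noteq> z"
  shows "1 - cnj \<xi> * z \<noteq> 0"
  using assms unit_circle_cnj_eq_inverse[of \<xi>] by (auto simp: field_simps)

lemma abs_le_3_norm_one_minus_cis:
  assumes "\<bar>\<theta>\<bar> \<le> pi"
  shows "\<bar>\<theta>\<bar> \<le> 3 * norm (1 - cis \<theta>)"
proof -
  define x where "x = \<bar>\<theta>\<bar> / 2"
  have x0: "0 \<le> x" and x1: "x \<le> pi / 2"
    using assms by (auto simp: x_def)
  have "\<bar>sin x - (\<Sum>m<3. sin_coeff m * x ^ m)\<bar> \<le> inverse (fact 3) * \<bar>x\<bar> ^ 3"
    by (rule Maclaurin_sin_bound)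
  moreover have "(\<Sum>m<3. sin_coeff m * x ^ m) = x" "inverse (fact 3) * \<bar>x\<bar> ^ 3 = x ^ 3 / 6"
    using x0 by (simp_all add: eval_nat_numeral sin_coeff_def)
  ultimately have "\<bar>sin x - x\<bar> \<le> x ^ 3 / 6"
    by simp
  then have "sin x \<ge> x - x ^ 3 / 6"
    by linarith
  moreover have "x * x \<le> 2 * 2"
    using x0 x1 pi_less_4 by (intro mult_mono) auto
  then have "x * x * x \<le> (2 * 2) * x"
    using x0 by (rule mult_right_mono)
  ultimately have sin_x: "sin x \<ge> x / 3"
    unfolding power3_eq_cube by linarith
  \<comment> \<open>the chord length is \<open>|1 - cis \<theta>| = 2 sin (|\<theta>| / 2)\<close>\<close>
  have "(norm (1 - cis \<theta>))\<^sup>2 = 2 - 2 * cos \<theta>"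
    using sin_cos_squared_add[of \<theta>] by (simp add: cmod_def power2_eq_square algebra_simps)
  also have "cos \<theta> = cos (2 * x)"
    by (cases "\<theta> \<ge> 0") (simp_all add: x_def)
  also have "2 - 2 * cos (2 * x) = (2 * sin x)\<^sup>2"
    unfolding cos_double_sin by (simp add: power_mult_distrib)
  finally have "(norm (1 - cis \<theta>))\<^sup>2 = (2 * sin x)\<^sup>2" .
  then have "norm (1 - cis \<theta>) = 2 * sin x"
    by (rule power2_eq_imp_eq) (use sin_ge_zero[of x] x0 x1 in auto)
  then show ?thesis
    using sin_x by (simp add: x_def)
qed

lemma continuous_on_unit_circle_Arg_comp:
  fixes G :: "real \<Rightarrow> 'a::topological_space"
  assumes cG: "continuous_on UNIV G" and periodic: "\<And>a b. cis a = cis b \<Longrightarrow> G a = G b"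
  shows "continuous_on unit_circle (\<lambda>w. G (Arg w))"
  unfolding continuous_on_eq_continuous_within
proof
  fix w :: complex
  assume w: "w \<in> unit_circle"
  have iG: "isCont G x" for x
    using cG by (simp add: continuous_on_eq_continuous_at)
  show "continuous (at w within unit_circle) (\<lambda>w. G (Arg w))"
  proof (cases "w \<in> \<real>\<^sub>\<le>\<^sub>0")
    case False
    then show ?thesis
      by (rule continuous_at_imp_continuous_within[OF isCont_o2[OF continuous_at_Arg iG]])
  next
    case True
    \<comment> \<open>on the cut of \<open>Arg\<close>, use the branch \<open>v \<mapsto> Arg (- v) + pi\<close> instead\<close>
    then have "- w \<notin> \<real>\<^sub>\<le>\<^sub>0"
      using w by (auto simp: complex_nonpos_Reals_iff complex_eq_iff cmod_def)
    then have "isCont (\<lambda>v. Arg (- v) + pi) w"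
      by (intro continuous_intros isCont_o2[OF _ continuous_at_Arg]) auto
    then have "isCont (\<lambda>v. G (Arg (- v) + pi)) w"
      by (rule isCont_o2[OF _ iG])
    moreover have "G (Arg (- v) + pi) = G (Arg v)" if "v \<in> unit_circle" for v
    proof (rule periodic)
      show "cis (Arg (- v) + pi) = cis (Arg v)"
        using that cis_Arg_unit_circle[of "- v"] by (simp add: cis_mult[symmetric] cis_Arg_unit_circle)
    qed
    ultimately show ?thesis
      by (rule continuous_transform_within[OF continuous_at_imp_continuous_within zero_less_one w])
  qed
qed

section \<open>Derivatives along the circle\<close>

definition circle_deriv :: "(complex \<Rightarrow> complex) \<Rightarrow> real \<Rightarrow> complex" where
  "circle_deriv f t = vector_derivative (\<lambda>t. f (cis t)) (at t)"

lemma C1_circle_has_vector_derivative: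
  assumes "C1_circle f"
  shows "((\<lambda>t. f (cis t)) has_vector_derivative circle_deriv f t) (at t)"
proof -
  have "(\<lambda>t. f (cis t)) differentiable at t"
    using assms unfolding C1_circle_def C1_differentiable_on_eq by simp
  then show ?thesis
    unfolding circle_deriv_def by (rule vector_derivative_works[THEN iffD1])
qed

lemma C1_circle_continuous_circle_deriv: "C1_circle f \<Longrightarrow> continuous_on UNIV (circle_deriv f)"
  unfolding C1_circle_def C1_differentiable_on_eq circle_deriv_def by simp

lemma circle_deriv_cis_cong:
  assumes f: "C1_circle f" and ab: "cis a = cis b"
  shows "circle_deriv f a = circle_deriv f b"
proof -
  have periodic: "f (cis (t + (a - b))) = f (cis t)" for t
    using ab by (simp add: cis_mult[symmetric] cis_divide[symmetric])
  have "((\<lambda>t. t + (a - b)) has_vector_derivative 1) (at b)"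
    using has_vector_derivative_add[OF has_vector_derivative_id has_vector_derivative_const] by simp
  from vector_diff_chain_at[OF this C1_circle_has_vector_derivative[OF f]]
  have "((\<lambda>t. f (cis (t + (a - b)))) has_vector_derivative circle_deriv f a) (at b)"
    by (simp add: o_def)
  then have "((\<lambda>t. f (cis t)) has_vector_derivative circle_deriv f a) (at b)"
    by (simp add: periodic)
  from vector_derivative_unique_at[OF C1_circle_has_vector_derivative[OF f] this]
  show ?thesis
    by simp
qed

lemma C1_circle_continuous_on:
  assumes f: "C1_circle f"
  shows "continuous_on unit_circle f"
proof -
  have "continuous_on UNIV (\<lambda>t. f (cis t))"
    using f unfolding C1_circle_def by (intro differentiable_imp_continuous_on C1_diff_imp_diff)
  then have "continuous_on unit_circle (\<lambda>w. f (cis (Arg w)))"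
    by (rule continuous_on_unit_circle_Arg_comp) simp
  then show ?thesis
    by (rule continuous_on_eq) (simp add: cis_Arg_unit_circle)
qed

lemma norm_diff_le_of_vector_derivative_bound:
  fixes \<eta> :: "real \<Rightarrow> 'a::real_normed_vector"
  assumes "\<And>t. (\<eta> has_vector_derivative D t) (at t)" and "\<And>t. norm (D t) \<le> B"
  shows "norm (\<eta> a - \<eta> b) \<le> B * \<bar>a - b\<bar>"
proof -
  have "norm (\<eta> a - \<eta> b) \<le> B * norm (a - b)"
  proof (rule differentiable_bound[of UNIV \<eta> "\<lambda>t h. h *\<^sub>R D t" B a b])
    show "(\<eta> has_derivative (\<lambda>h. h *\<^sub>R D x)) (at x within UNIV)" for x
      using assms(1)[of x] by (simp add: has_vector_derivative_def)
    show "onorm (\<lambda>h. h *\<^sub>R D x) \<le> B" for x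
      using onorm_scaleR_left[of "\<lambda>h. h" "D x"] onorm_id[where 'a=real] assms(2)[of x] by simp
  qed auto
  then show ?thesis
    by simp
qed

lemma has_vector_derivative_cis_mult:
  "((\<lambda>t. cis (k * t)) has_vector_derivative (\<i> * of_real k * cis (k * t))) (at t within X)"
  unfolding has_vector_derivative_def
  by (auto intro!: derivative_eq_intros simp: scaleR_conv_of_real algebra_simps)

lemma has_vector_derivative_imp_tendsto_quotient:
  fixes G :: "real \<Rightarrow> complex"
  assumes "(G has_vector_derivative L) (at s)"
  shows "((\<lambda>h. (G (s + h) - G s) / of_real h) \<longlongrightarrow> L) (at 0)"
proof -
  have "(\<lambda>h. norm (G (s + h) - G s - h *\<^sub>R L) / norm h) \<midarrow>0\<rightarrow> 0"
    using assms by (simp add: has_vector_derivative_def has_derivative_at)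
  moreover have ev: "\<forall>\<^sub>F h in at 0. norm (G (s + h) - G s - h *\<^sub>R L) / norm h
      = norm ((G (s + h) - G s) / of_real h - L)"
  proof (rule eventually_at_filter[THEN iffD2], intro always_eventually allI impI)
    fix h :: real
    assume "h \<noteq> 0"
    then have "(G (s + h) - G s) / of_real h - L = (G (s + h) - G s - h *\<^sub>R L) / of_real h"
      by (simp add: scaleR_conv_of_real diff_divide_distrib)
    then show "norm (G (s + h) - G s - h *\<^sub>R L) / norm h = norm ((G (s + h) - G s) / of_real h - L)"
      by (simp add: norm_divide)
  qed
  ultimately have "((\<lambda>h. norm ((G (s + h) - G s) / of_real h - L)) \<longlongrightarrow> 0) (at 0)"
    using tendsto_cong[OF ev] by simp
  then have "((\<lambda>h. (G (s + h) - G s) / of_real h - L) \<longlongrightarrow> 0) (at 0)"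
    by (rule tendsto_norm_zero_iff[THEN iffD1])
  then show ?thesis
    by (rule Lim_null[THEN iffD2])
qed

lemma tendsto_quotient_one_minus_cis:
  fixes g :: "real \<Rightarrow> complex"
  assumes "(g has_vector_derivative D) (at s)"
  shows "((\<lambda>\<theta>. (g (s + \<theta>) - g s) / (1 - cis (- \<theta>))) \<longlongrightarrow> D / \<i>) (at 0)"
proof -
  have "((\<lambda>t. 1 - cis (- 1 * t)) has_vector_derivative \<i>) (at 0)"
    using has_vector_derivative_cis_mult[of "-1" 0 UNIV] by (auto intro!: derivative_eq_intros)
  from has_vector_derivative_imp_tendsto_quotient[OF this]
  have "((\<lambda>h. (1 - cis (- h)) / of_real h) \<longlongrightarrow> \<i>) (at 0)"
    by simp
  with has_vector_derivative_imp_tendsto_quotient[OF assms]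
  have "((\<lambda>h. ((g (s + h) - g s) / of_real h) / ((1 - cis (- h)) / of_real h)) \<longlongrightarrow> D / \<i>) (at 0)"
    by (intro tendsto_divide) auto
  moreover have ev: "\<forall>\<^sub>F h in at 0. ((g (s + h) - g s) / of_real h) / ((1 - cis (- h)) / of_real h)
      = (g (s + h) - g s) / (1 - cis (- h))"
    by (auto simp: eventually_at_filter)
  ultimately show ?thesis
    using tendsto_cong[OF ev] by simp
qed

lemma C1_circle_const: "C1_circle (\<lambda>x. c)"
  unfolding C1_circle_def by simp

lemma C1_circle_linear:
  "C1_circle f \<Longrightarrow> C1_circle g \<Longrightarrow> C1_circle (\<lambda>x. a * f x + b * g x)"
  unfolding C1_circle_def
  by (intro C1_differentiable_on_add C1_differentiable_on_mult C1_differentiable_on_const)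

lemma C1_differentiable_on_cis_mult: "(\<lambda>t. cis (k * t)) C1_differentiable_on UNIV"
  unfolding C1_differentiable_on_def
proof (intro exI conjI ballI)
  show "((\<lambda>t. cis (k * t)) has_vector_derivative \<i> * of_real k * cis (k * t)) (at t)" for t
    by (rule has_vector_derivative_cis_mult)
  show "continuous_on UNIV (\<lambda>t. \<i> * of_real k * cis (k * t))"
    by (intro continuous_intros)
qed

lemma C1_circle_powi: "C1_circle (\<lambda>x. x powi n)"
  unfolding C1_circle_def cis_power_int by (rule C1_differentiable_on_cis_mult)

lemma C1_circle_mult_ident: "C1_circle f \<Longrightarrow> C1_circle (\<lambda>x. x * f x)"
  unfolding C1_circle_def using C1_differentiable_on_cis_mult[of 1]
  by (intro C1_differentiable_on_mult) simp_all

lemma circle_deriv_linear: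
  assumes "C1_circle f" "C1_circle g"
  shows "circle_deriv (\<lambda>x. a * f x + b * g x) t = a * circle_deriv f t + b * circle_deriv g t"
  unfolding circle_deriv_def
  using assms[THEN C1_circle_has_vector_derivative, of t, unfolded circle_deriv_def]
  by (intro vector_derivative_at) (auto intro!: derivative_eq_intros)

lemma circle_deriv_mult_ident:
  assumes "C1_circle f"
  shows "circle_deriv (\<lambda>x. x * f x) t = \<i> * cis t * f (cis t) + cis t * circle_deriv f t"
proof -
  have "((\<lambda>t. cis t * f (cis t)) has_vector_derivative
      cis t * circle_deriv f t + \<i> * cis t * f (cis t)) (at t)"
    using has_vector_derivative_mult[OF has_vector_derivative_cis_mult[of 1 t UNIV]
        C1_circle_has_vector_derivative[OF assms]]
    by simp
  then show ?thesis
    unfolding circle_deriv_def by (subst vector_derivative_at) (simp_all add: add.commute)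
qed

lemma circle_deriv_cong:
  "(\<And>x. x \<in> unit_circle \<Longrightarrow> f x = g x) \<Longrightarrow> circle_deriv f = circle_deriv g"
  unfolding circle_deriv_def by simp

section \<open>The difference quotient\<close>

lemma tendsto_dq_quotient:
  assumes f: "C1_circle f" and z: "z \<in> unit_circle"
  shows "((\<lambda>w. (f w - f z) / (1 - cnj w * z)) \<longlongrightarrow> circle_deriv f (Arg z) / \<i>)
           (at z within unit_circle)"
proof -
  define \<Lambda> where "\<Lambda> h = (f (cis (Arg z + h)) - f (cis (Arg z))) / (1 - cis (- h))" for h
  have "(\<Lambda> \<longlongrightarrow> circle_deriv f (Arg z) / \<i>) (at 0)"
    unfolding \<Lambda>_def by (rule tendsto_quotient_one_minus_cis[OF C1_circle_has_vector_derivative[OF f]])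
  moreover have "filterlim (\<lambda>w. Arg (w / z)) (at 0) (at z within unit_circle)"
    unfolding filterlim_at
  proof
    have "continuous (at z) (\<lambda>w. Arg (w / z))"
      using z continuous_at_Arg[of 1]
      by (intro continuous_at_compose[of z "\<lambda>w. w / z" Arg, unfolded o_def]) (auto intro!: continuous_intros)
    from continuous_at_imp_continuous_within[OF this, of unit_circle, unfolded continuous_within]
    show "((\<lambda>w. Arg (w / z)) \<longlongrightarrow> 0) (at z within unit_circle)"
      using z by (cases "z = 0") auto
    show "\<forall>\<^sub>F w in at z within unit_circle. Arg (w / z) \<in> UNIV \<and> Arg (w / z) \<noteq> 0"
      using z by (auto simp: eventually_at_filter Arg_divide_nonzero)
  qed
  ultimately have "((\<lambda>w. \<Lambda> (Arg (w / z))) \<longlongrightarrow> circle_deriv f (Arg z) / \<i>) (at z within unit_circle)"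
    by (rule filterlim_compose)
  moreover have ev: "\<forall>\<^sub>F w in at z within unit_circle. \<Lambda> (Arg (w / z)) = (f w - f z) / (1 - cnj w * z)"
    using z by (auto simp: eventually_at_filter \<Lambda>_def unit_circle_polar cis_Arg_unit_circle)
  ultimately show ?thesis
    using tendsto_cong[OF ev] by simp
qed

lemma dq_diagonal:
  assumes "C1_circle f" "z \<in> unit_circle"
  shows "dq f z z = circle_deriv f (Arg z) / \<i>"
  unfolding dq_def
  using tendsto_Lim[OF at_within_unit_circle_nontrivial tendsto_dq_quotient] assms by simp

lemma dq_off_diagonal: "\<xi> \<noteq> z \<Longrightarrow> dq f z \<xi> = (f \<xi> - f z) / (1 - cnj \<xi> * z)"
  by (simp add: dq_def)

lemma continuous_on_dq:
  assumes f: "C1_circle f" and z: "z \<in> unit_circle"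
  shows "continuous_on unit_circle (dq f z)"
  unfolding continuous_on_eq_continuous_within
proof
  fix \<xi>
  assume \<xi>: "\<xi> \<in> unit_circle"
  show "continuous (at \<xi> within unit_circle) (dq f z)"
  proof (cases "\<xi> = z")
    case True
    have ev: "\<forall>\<^sub>F w in at z within unit_circle. (f w - f z) / (1 - cnj w * z) = dq f z w"
      by (auto simp: eventually_at_filter dq_off_diagonal)
    show ?thesis
      using tendsto_cong[OF ev] tendsto_dq_quotient[OF f z] dq_diagonal[OF f z] True
      by (simp add: continuous_within)
  next
    case False
    have "continuous (at \<xi> within unit_circle) (\<lambda>w. (f w - f z) / (1 - cnj w * z))"
      using C1_circle_continuous_on[OF f] \<xi> one_minus_cnj_mult_nonzero[OF \<xi> z False]
      by (intro continuous_intros) (auto simp: continuous_on_eq_continuous_within)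
    then show ?thesis
    proof (rule continuous_transform_within[OF _ _ \<xi>])
      show "0 < dist \<xi> z"
        using False by simp
      show "(f w - f z) / (1 - cnj w * z) = dq f z w" if "dist w \<xi> < dist \<xi> z" for w
        using that by (cases "w = z") (simp_all add: dist_commute dq_off_diagonal)
    qed
  qed
qed

text \<open>The factor 3 comes from the chord estimate \<open>|\<theta>| \<le> 3 |1 - cis \<theta>|\<close>, the mean value
  theorem bounding the numerator by \<open>B |\<theta>|\<close>.\<close>
lemma norm_dq_le:
  assumes f: "C1_circle f" and B: "\<And>t. norm (circle_deriv f t) \<le> B"
    and z: "z \<in> unit_circle" and \<xi>: "\<xi> \<in> unit_circle"
  shows "norm (dq f z \<xi>) \<le> 3 * B"
proof -
  have B0: "0 \<le> B"
    using B[of 0] norm_ge_zero order_trans by blast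
  show ?thesis
  proof (cases "\<xi> = z")
    case True
    then show ?thesis
      using B0 dq_diagonal[OF f z] B[of "Arg z"] by (simp add: norm_divide norm_mult)
  next
    case False
    define h where "h = Arg (\<xi> / z)"
    have "\<bar>h\<bar> \<le> pi"
      using Arg_bounded[of "\<xi> / z"] by (simp add: h_def abs_le_iff)
    then have chord: "\<bar>h\<bar> \<le> 3 * norm (1 - cnj \<xi> * z)"
      using abs_le_3_norm_one_minus_cis[of "- h"] by (simp add: h_def unit_circle_polar(2)[OF \<xi> z])
    have "norm (f \<xi> - f z) \<le> B * \<bar>h\<bar>"
      using norm_diff_le_of_vector_derivative_bound[OF C1_circle_has_vector_derivative[OF f] B,
          of "Arg z + h" "Arg z"]
      by (simp add: h_def unit_circle_polar(1)[OF \<xi> z] cis_Arg_unit_circle[OF z])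
    also have "\<dots> \<le> B * (3 * norm (1 - cnj \<xi> * z))"
      by (rule mult_left_mono[OF chord B0])
    finally show ?thesis
      using False one_minus_cnj_mult_nonzero[OF \<xi> z False]
      by (simp add: dq_off_diagonal norm_divide divide_le_eq)
  qed
qed

lemma dq_linear:
  assumes f: "C1_circle f" and g: "C1_circle g" and z: "z \<in> unit_circle"
  shows "dq (\<lambda>x. a * f x + b * g x) z \<xi> = a * dq f z \<xi> + b * dq g z \<xi>"
proof (cases "\<xi> = z")
  case True
  then show ?thesis
    using dq_diagonal[OF C1_circle_linear[OF f g, of a b] z] dq_diagonal[OF f z] dq_diagonal[OF g z]
    by (simp add: circle_deriv_linear[OF f g] algebra_simps)
next
  case False
  define d where "d = 1 - cnj \<xi> * z"
  show ?thesis
    unfolding dq_off_diagonal[OF False] d_def[symmetric] by (cases "d = 0") (simp_all add: field_simps)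
qed

lemma dq_const: "z \<in> unit_circle \<Longrightarrow> dq (\<lambda>x. c) z \<xi> = 0"
  using dq_diagonal[OF C1_circle_const] by (cases "\<xi> = z") (simp_all add: dq_off_diagonal circle_deriv_def)

lemma dq_mult_ident:
  assumes f: "C1_circle f" and z: "z \<in> unit_circle" and \<xi>: "\<xi> \<in> unit_circle"
  shows "dq (\<lambda>x. x * f x) z \<xi> = z * dq f z \<xi> + \<xi> * f \<xi>"
proof (cases "\<xi> = z")
  case True
  then show ?thesis
    using dq_diagonal[OF C1_circle_mult_ident[OF f] z] dq_diagonal[OF f z] cis_Arg_unit_circle[OF z]
    by (simp add: circle_deriv_mult_ident[OF f] field_simps)
next
  case False
  have "cnj \<xi> * \<xi> = 1"
    by (rule unit_circle_cnj_mult[OF \<xi>])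
  then have "\<xi> * f \<xi> - z * f z = z * (f \<xi> - f z) + \<xi> * f \<xi> * (1 - cnj \<xi> * z)"
    by algebra
  then show ?thesis
    using one_minus_cnj_mult_nonzero[OF \<xi> z False]
    by (simp add: dq_off_diagonal[OF False] add_divide_distrib)
qed

lemma dq_cong:
  assumes "C1_circle f" "C1_circle g" and fg: "\<And>x. x \<in> unit_circle \<Longrightarrow> f x = g x"
    and z: "z \<in> unit_circle" and \<xi>: "\<xi> \<in> unit_circle"
  shows "dq f z \<xi> = dq g z \<xi>"
  using assms dq_diagonal[of _ z] circle_deriv_cong[OF fg]
  by (cases "\<xi> = z") (simp_all add: dq_off_diagonal)

section \<open>Measures on the circle and unitary maps between their \<open>L\<^sup>2\<close> spaces\<close>

lemma circle_measure_space: "circle_measure M \<Longrightarrow> space M = unit_circle"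
  unfolding circle_measure_def
  using sets_eq_imp_space_eq[of M "restrict_space borel unit_circle"] by (simp add: space_restrict_space)

lemma AE_circle_measure_unit_circle: "circle_measure M \<Longrightarrow> AE z in M. z \<in> unit_circle"
  by (rule AE_I2) (simp add: circle_measure_space)

lemma circle_measure_borel_measurable_continuous:
  assumes M: "circle_measure M" and h: "continuous_on unit_circle h"
  shows "h \<in> borel_measurable M"
proof -
  have "h \<in> borel_measurable (restrict_space borel unit_circle)"
    by (rule borel_measurable_continuous_on_restrict[OF h])
  then show ?thesis
    using M unfolding circle_measure_def by (simp cong: measurable_cong_sets)
qed

lemma circle_measure_integrable_continuous:
  fixes h :: "complex \<Rightarrow> 'b::{banach,second_countable_topology}"
  assumes M: "circle_measure M" and h: "continuous_on unit_circle h"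
  shows "integrable M h"
proof -
  interpret prob_space M
    using M by (simp add: circle_measure_def)
  obtain B where B: "\<And>x. x \<in> unit_circle \<Longrightarrow> norm (h x) \<le> B"
    using continuous_on_compact_bound[OF compact_sphere h] by blast
  have "AE x in M. norm (h x) \<le> B"
    by (rule AE_I2) (simp add: B circle_measure_space[OF M])
  then show ?thesis
    by (rule integrable_const_bound) (rule circle_measure_borel_measurable_continuous[OF M h])
qed

lemma L2_continuous:
  assumes M: "circle_measure M" and h: "continuous_on unit_circle h"
  shows "L2 M h"
  unfolding L2_def using h
  by (auto intro!: circle_measure_borel_measurable_continuous[OF M]
      circle_measure_integrable_continuous[OF M] continuous_intros)

lemma L2_C1_circle: "circle_measure M \<Longrightarrow> C1_circle f \<Longrightarrow> L2 M f"
  by (rule L2_continuous) (simp_all add: C1_circle_continuous_on)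

lemma L2_inner_self: "L2_inner M h h = of_real (LINT x|M. (norm (h x))\<^sup>2)"
proof -
  have "(\<lambda>x. h x * cnj (h x)) = (\<lambda>x. complex_of_real ((norm (h x))\<^sup>2))"
    by (rule ext) (rule complex_norm_square[symmetric])
  then show ?thesis
    by (simp only: L2_inner_def integral_complex_of_real)
qed

lemma unitary_L2_L2: "unitary_L2 M N V \<Longrightarrow> L2 M f \<Longrightarrow> L2 N (V f)"
  unfolding unitary_L2_def by blast

lemma unitary_L2_linear:
  "unitary_L2 M N V \<Longrightarrow> L2 M f \<Longrightarrow> L2 M g \<Longrightarrow>
    AE z in N. V (\<lambda>x. a * f x + b * g x) z = a * V f z + b * V g z"
  unfolding unitary_L2_def by blast

lemma unitary_L2_integral_norm_square:
  assumes "unitary_L2 M N V" "L2 M h"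
  shows "(LINT z|N. (norm (V h z))\<^sup>2) = (LINT x|M. (norm (h x))\<^sup>2)"
proof -
  have "L2_inner N (V h) (V h) = L2_inner M h h"
    using assms unfolding unitary_L2_def by blast
  then show ?thesis
    by (simp add: L2_inner_self)
qed

lemma unitary_L2_cong:
  assumes "unitary_L2 M N V" "circle_measure M" "L2 M f" "L2 M g"
    and "\<And>x. x \<in> unit_circle \<Longrightarrow> f x = g x"
  shows "AE z in N. V f z = V g z"
proof -
  have "AE x in M. f x = g x"
    by (rule AE_I2) (simp add: assms(5) circle_measure_space[OF assms(2)])
  then show ?thesis
    using assms(1,3,4) unfolding unitary_L2_def by blast
qed

lemma AE_tendsto_zero_if_summable_integral_norm_square:
  fixes g :: "nat \<Rightarrow> 'a \<Rightarrow> 'b::{banach,second_countable_topology}"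
  assumes [measurable]: "\<And>k. g k \<in> borel_measurable M"
    and int: "\<And>k. integrable M (\<lambda>x. (norm (g k x))\<^sup>2)"
    and sum: "summable (\<lambda>k. LINT x|M. (norm (g k x))\<^sup>2)"
  shows "AE x in M. (\<lambda>k. g k x) \<longlonglongrightarrow> 0"
proof -
  have "(\<integral>\<^sup>+ x. (\<Sum>k. ennreal ((norm (g k x))\<^sup>2)) \<partial>M) = (\<Sum>k. \<integral>\<^sup>+ x. ennreal ((norm (g k x))\<^sup>2) \<partial>M)"
    by (rule nn_integral_suminf) measurable
  also have "\<dots> = (\<Sum>k. ennreal (LINT x|M. (norm (g k x))\<^sup>2))"
    by (simp add: nn_integral_eq_integral[OF int])
  also have "\<dots> = ennreal (\<Sum>k. LINT x|M. (norm (g k x))\<^sup>2)"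
    by (rule suminf_ennreal2[OF _ sum]) simp
  finally have "(\<integral>\<^sup>+ x. (\<Sum>k. ennreal ((norm (g k x))\<^sup>2)) \<partial>M) \<noteq> \<infinity>"
    by simp
  then have "AE x in M. (\<Sum>k. ennreal ((norm (g k x))\<^sup>2)) \<noteq> \<infinity>"
    by (intro nn_integral_noteq_infinite) measurable
  then show ?thesis
  proof (rule AE_mp, intro AE_I2 impI)
    fix x
    assume "(\<Sum>k. ennreal ((norm (g k x))\<^sup>2)) \<noteq> \<infinity>"
    then have "summable (\<lambda>k. (norm (g k x))\<^sup>2)"
      by (intro summable_suminf_not_top) simp_all
    then have "(\<lambda>k. sqrt ((norm (g k x))\<^sup>2)) \<longlonglongrightarrow> sqrt 0"
      by (intro tendsto_real_sqrt summable_LIMSEQ_zero)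
    then show "(\<lambda>k. g k x) \<longlonglongrightarrow> 0"
      by (simp add: tendsto_norm_zero_iff)
  qed
qed

section \<open>Laurent polynomials\<close>

definition laurent :: "(complex \<times> int) list \<Rightarrow> complex \<Rightarrow> complex" where
  "laurent L w = (\<Sum>(c, n)\<leftarrow>L. c * w powi n)"

lemma laurent_Nil [simp]: "laurent [] w = 0"
  by (simp add: laurent_def)

lemma laurent_Cons [simp]: "laurent ((c, n) # L) w = c * w powi n + laurent L w"
  by (simp add: laurent_def)

lemma laurent_append [simp]: "laurent (K @ L) w = laurent K w + laurent L w"
  by (simp add: laurent_def)

lemma laurent_scale: "laurent (map (\<lambda>(c, n). (a * c, n)) L) w = a * laurent L w"
  by (induction L) (auto simp: algebra_simps)

definition laurent_mult :: "(complex \<times> int) list \<Rightarrow> (complex \<times> int) list \<Rightarrow> (complex \<times> int) list" where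
  "laurent_mult K L = concat (map (\<lambda>(c, n). map (\<lambda>(d, m). (c * d, n + m)) L) K)"

lemma laurent_laurent_mult:
  assumes "w \<noteq> 0"
  shows "laurent (laurent_mult K L) w = laurent K w * laurent L w"
proof (induction K)
  case Nil
  then show ?case
    by (simp add: laurent_mult_def)
next
  case (Cons p K)
  obtain c n where p: "p = (c, n)"
    by (cases p)
  have "laurent (map (\<lambda>(d, m). (c * d, n + m)) L) w = c * w powi n * laurent L w"
    by (induction L) (auto simp: assms power_int_add algebra_simps)
  with Cons show ?case
    by (simp add: laurent_mult_def p algebra_simps)
qed

lemma C1_circle_laurent: "C1_circle (laurent L)"
proof (induction L)
  case Nil
  then show ?case
    using C1_circle_const[of 0] by (simp add: laurent_def)
next
  case (Cons p L)
  obtain c n where p: "p = (c, n)"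
    by (cases p)
  show ?case
    using C1_circle_linear[OF C1_circle_powi[of n] Cons.IH, of c 1] by (simp add: p)
qed

lemma real_polynomial_function_laurent:
  assumes "real_polynomial_function p"
  obtains L where "\<And>w. w \<in> unit_circle \<Longrightarrow> complex_of_real (p w) = laurent L w"
  using assms
proof (induction p arbitrary: thesis rule: real_polynomial_function.induct)
  case (linear p)
  \<comment> \<open>on the circle, \<open>Re w = (w + w\<^sup>-\<^sup>1) / 2\<close> and \<open>Im w = (w - w\<^sup>-\<^sup>1) / (2 \<i>)\<close>\<close>
  interpret bounded_linear p by fact
  define A where "A = (complex_of_real (p 1) - \<i> * complex_of_real (p \<i>)) / 2"
  define B where "B = (complex_of_real (p 1) + \<i> * complex_of_real (p \<i>)) / 2"
  have "complex_of_real (p w) = laurent [(A, 1), (B, -1)] w" if w: "w \<in> unit_circle" for w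
  proof -
    have "w = Re w *\<^sub>R 1 + Im w *\<^sub>R \<i>"
      by (simp add: complex_eq_iff)
    then have "p w = p (Re w *\<^sub>R 1 + Im w *\<^sub>R \<i>)"
      by simp
    also have "\<dots> = Re w * p 1 + Im w * p \<i>"
      by (simp add: add scaleR)
    finally have "complex_of_real (p w) = A * w + B * cnj w"
      by (simp add: A_def B_def complex_eq_iff field_simps)
    then show ?thesis
      using unit_circle_cnj_eq_inverse[OF w] by (simp add: power_int_minus)
  qed
  then show ?case
    by (rule linear.prems)
next
  case (const c)
  show ?case
    by (rule const.prems[of "[(complex_of_real c, 0)]"]) simp
next
  case (add f g)
  obtain K L where "\<And>w. w \<in> unit_circle \<Longrightarrow> complex_of_real (f w) = laurent K w"
    and "\<And>w. w \<in> unit_circle \<Longrightarrow> complex_of_real (g w) = laurent L w"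
    using add.IH by metis
  then show ?case
    by (intro add.prems[of "K @ L"]) simp
next
  case (mult f g)
  obtain K L where K: "\<And>w. w \<in> unit_circle \<Longrightarrow> complex_of_real (f w) = laurent K w"
    and L: "\<And>w. w \<in> unit_circle \<Longrightarrow> complex_of_real (g w) = laurent L w"
    using mult.IH by metis
  show ?case
  proof (rule mult.prems)
    fix w :: complex
    assume "w \<in> unit_circle"
    then show "complex_of_real (f w * g w) = laurent (laurent_mult K L) w"
      using K L by (subst laurent_laurent_mult) auto
  qed
qed

text \<open>Termwise primitive in \<open>t\<close> of \<open>\<i> e\<^sup>i\<^sup>t L(e\<^sup>i\<^sup>t)\<close>; the \<open>w\<^sup>-\<^sup>1\<close> terms, whose primitives
  are not periodic, are collected in the residue.\<close>
definition laurent_primitive :: "(complex \<times> int) list \<Rightarrow> (complex \<times> int) list" where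
  "laurent_primitive L = map (\<lambda>(c, n). (c / of_int (n + 1), n + 1)) (filter (\<lambda>(c, n). n \<noteq> -1) L)"

definition laurent_residue :: "(complex \<times> int) list \<Rightarrow> complex" where
  "laurent_residue L = sum_list (map fst (filter (\<lambda>(c, n). n = -1) L))"

lemma has_vector_derivative_cis_powi:
  "((\<lambda>t. cis t powi k) has_vector_derivative (\<i> * of_int k * cis t powi k)) (at t)"
  using has_vector_derivative_cis_mult[of "of_int k" t UNIV] by (simp add: cis_power_int)

lemma has_vector_derivative_laurent_primitive:
  "((\<lambda>t. laurent (laurent_primitive L) (cis t)) has_vector_derivative
      \<i> * cis t * laurent L (cis t) - \<i> * laurent_residue L) (at t)"
proof (induction L)
  case Nil
  show ?case
    by (simp add: laurent_primitive_def laurent_residue_def)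
next
  case (Cons p L)
  obtain c n where p: "p = (c, n)"
    by (cases p)
  show ?case
  proof (cases "n = -1")
    case True
    then show ?thesis
      using Cons.IH
      by (simp add: p laurent_primitive_def laurent_residue_def power_int_minus cis_mult algebra_simps)
  next
    case False
    then have n1: "of_int (n + 1) \<noteq> (0::complex)"
      by (metis add.commute add_eq_0_iff of_int_eq_0_iff)
    have "((\<lambda>t. c / of_int (n + 1) * cis t powi (n + 1)) has_vector_derivative
        c / of_int (n + 1) * (\<i> * of_int (n + 1) * cis t powi (n + 1))) (at t)"
      by (rule has_vector_derivative_mult_right[OF has_vector_derivative_cis_powi])
    also have "c / of_int (n + 1) * (\<i> * of_int (n + 1) * cis t powi (n + 1)) = \<i> * cis t * (c * cis t powi n)"
      using n1 by (simp add: power_int_add)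
    finally have "((\<lambda>t. c / of_int (n + 1) * cis t powi (n + 1)) has_vector_derivative
        \<i> * cis t * (c * cis t powi n)) (at t)" .
    from has_vector_derivative_add[OF this Cons.IH] False show ?thesis
      by (simp add: p laurent_primitive_def laurent_residue_def algebra_simps)
  qed
qed

section \<open>Approximation in \<open>C\<^sup>1\<close> by Laurent polynomials\<close>

lemma laurent_approx_continuous:
  assumes \<Phi>: "continuous_on unit_circle \<Phi>" and \<epsilon>: "0 < \<epsilon>"
  obtains L where "\<And>w. w \<in> unit_circle \<Longrightarrow> norm (\<Phi> w - laurent L w) \<le> \<epsilon>"
proof -
  have \<epsilon>2: "0 < \<epsilon> / 2"
    using \<epsilon> by simp
  obtain p where p: "real_polynomial_function p" "\<And>w. w \<in> unit_circle \<Longrightarrow> \<bar>Re (\<Phi> w) - p w\<bar> < \<epsilon> / 2"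
    using Stone_Weierstrass_real_polynomial_function[OF compact_sphere continuous_on_Re[OF \<Phi>] \<epsilon>2]
    by blast
  obtain q where q: "real_polynomial_function q" "\<And>w. w \<in> unit_circle \<Longrightarrow> \<bar>Im (\<Phi> w) - q w\<bar> < \<epsilon> / 2"
    using Stone_Weierstrass_real_polynomial_function[OF compact_sphere continuous_on_Im[OF \<Phi>] \<epsilon>2]
    by blast
  obtain P where P: "\<And>w. w \<in> unit_circle \<Longrightarrow> complex_of_real (p w) = laurent P w"
    using real_polynomial_function_laurent[OF p(1)] by blast
  obtain Q where Q: "\<And>w. w \<in> unit_circle \<Longrightarrow> complex_of_real (q w) = laurent Q w"
    using real_polynomial_function_laurent[OF q(1)] by blast
  show ?thesis
  proof (rule that[of "P @ map (\<lambda>(c, n). (\<i> * c, n)) Q"])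
    fix w :: complex
    assume w: "w \<in> unit_circle"
    have "\<Phi> w - laurent (P @ map (\<lambda>(c, n). (\<i> * c, n)) Q) w
        = complex_of_real (Re (\<Phi> w) - p w) + \<i> * complex_of_real (Im (\<Phi> w) - q w)"
      using P[OF w] Q[OF w] by (simp add: laurent_scale complex_eq_iff)
    also have "norm \<dots> \<le> \<bar>Re (\<Phi> w) - p w\<bar> + \<bar>Im (\<Phi> w) - q w\<bar>"
      using norm_triangle_ineq[of "complex_of_real (Re (\<Phi> w) - p w)" "\<i> * complex_of_real (Im (\<Phi> w) - q w)"]
      by (simp add: norm_mult del: of_real_diff)
    finally show "norm (\<Phi> w - laurent (P @ map (\<lambda>(c, n). (\<i> * c, n)) Q) w) \<le> \<epsilon>"
      using p(2)[OF w] q(2)[OF w] by simp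
  qed
qed

lemma circle_deriv_tangential:
  assumes f: "C1_circle f"
  obtains \<Phi> where "continuous_on unit_circle \<Phi>" "\<And>t. circle_deriv f t = \<i> * cis t * \<Phi> (cis t)"
proof
  have "continuous_on unit_circle (\<lambda>w. circle_deriv f (Arg w))"
    using continuous_on_unit_circle_Arg_comp[OF C1_circle_continuous_circle_deriv[OF f]]
      circle_deriv_cis_cong[OF f] by blast
  then show "continuous_on unit_circle (\<lambda>w. - \<i> * cnj w * circle_deriv f (Arg w))"
    by (intro continuous_intros)
  show "circle_deriv f t = \<i> * cis t * (- \<i> * cnj (cis t) * circle_deriv f (Arg (cis t)))" for t
    using circle_deriv_cis_cong[OF f, of "Arg (cis t)" t] unit_circle_cnj_mult[of "cis t"]
    by (simp add: cis_Arg_unit_circle algebra_simps)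
qed

text \<open>The mean of the derivative of a \<open>2\<pi>\<close>-periodic function vanishes.\<close>
lemma norm_le_of_periodic_derivative_plus_const:
  fixes \<eta> :: "real \<Rightarrow> complex"
  assumes \<eta>: "\<And>t. (\<eta> has_vector_derivative \<eta>' t) (at t)" and periodic: "\<eta> (2 * pi) = \<eta> 0"
    and bound: "\<And>t. norm (\<eta>' t + c) \<le> \<delta>"
  shows "norm c \<le> \<delta>"
proof -
  have "((\<lambda>t. \<eta> t + c * of_real t) has_vector_derivative \<eta>' t + c) (at t)" for t
    using has_vector_derivative_add[OF \<eta> has_vector_derivative_real_field[OF DERIV_cmult_Id]]
    by simp
  from norm_diff_le_of_vector_derivative_bound[OF this bound, of "2 * pi" 0]
  have "norm c * (2 * pi) \<le> \<delta> * (2 * pi)"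
    using periodic by (simp add: norm_mult)
  then show ?thesis
    by simp
qed

lemma norm_le_of_circle_deriv_bound:
  assumes h: "C1_circle h" and h1: "h 1 = 0" and B: "\<And>t. norm (circle_deriv h t) \<le> B"
    and w: "w \<in> unit_circle"
  shows "norm (h w) \<le> pi * B"
proof -
  have "norm (h (cis (Arg w)) - h (cis 0)) \<le> B * \<bar>Arg w - 0\<bar>"
    by (rule norm_diff_le_of_vector_derivative_bound[OF C1_circle_has_vector_derivative[OF h] B])
  also have "\<dots> \<le> B * pi"
    using Arg_bounded[of w] B[of 0] norm_ge_zero[of "circle_deriv h 0"]
    by (intro mult_left_mono) (auto simp: abs_le_iff simp del: norm_ge_zero)
  finally show ?thesis
    using h1 cis_Arg_unit_circle[OF w] by (simp add: mult.commute)
qed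

text \<open>The residue term has no periodic primitive, so it must be small when \<open>\<i> w Q(w)\<close> approximates the
  derivative of the periodic function \<open>f(e\<^sup>i\<^sup>t)\<close>.\<close>
lemma norm_laurent_residue_le:
  assumes f: "C1_circle f" and D: "\<And>t. circle_deriv f t = \<i> * cis t * \<Phi> (cis t)"
    and Q: "\<And>w. w \<in> unit_circle \<Longrightarrow> norm (\<Phi> w - laurent Q w) \<le> \<delta>"
  shows "norm (laurent_residue Q) \<le> \<delta>"
proof -
  define p' where "p' t = \<i> * cis t * laurent Q (cis t) - \<i> * laurent_residue Q" for t
  have "norm (- \<i> * laurent_residue Q) \<le> \<delta>"
  proof (rule norm_le_of_periodic_derivative_plus_const)
    show "((\<lambda>t. f (cis t) - laurent (laurent_primitive Q) (cis t)) has_vector_derivative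
        circle_deriv f t - p' t) (at t)" for t
      unfolding p'_def
      by (rule has_vector_derivative_diff[OF C1_circle_has_vector_derivative[OF f]
            has_vector_derivative_laurent_primitive])
    show "f (cis (2 * pi)) - laurent (laurent_primitive Q) (cis (2 * pi))
        = f (cis 0) - laurent (laurent_primitive Q) (cis 0)"
      by (simp add: complex_eq_iff)
    have "circle_deriv f t - p' t + - \<i> * laurent_residue Q = \<i> * cis t * (\<Phi> (cis t) - laurent Q (cis t))" for t
      by (simp add: D p'_def algebra_simps)
    then show "norm (circle_deriv f t - p' t + - \<i> * laurent_residue Q) \<le> \<delta>" for t
      using Q[of "cis t"] by (simp add: norm_mult)
  qed
  then show ?thesis
    by (simp add: norm_mult)
qed

text \<open>Approximate the derivative \<open>\<i> w \<Phi>(w)\<close> by a Laurent polynomial and integrate termwise.\<close>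
lemma C1_circle_laurent_approx:
  assumes f: "C1_circle f" and \<epsilon>: "0 < \<epsilon>"
  obtains L where "\<And>w. w \<in> unit_circle \<Longrightarrow> norm (f w - laurent L w) \<le> 4 * \<epsilon>"
    and "\<And>t. norm (circle_deriv (\<lambda>w. f w - laurent L w) t) \<le> \<epsilon>"
proof -
  obtain \<Phi> where \<Phi>: "continuous_on unit_circle \<Phi>" and D: "\<And>t. circle_deriv f t = \<i> * cis t * \<Phi> (cis t)"
    using circle_deriv_tangential[OF f] by blast
  obtain Q where Q: "\<And>w. w \<in> unit_circle \<Longrightarrow> norm (\<Phi> w - laurent Q w) \<le> \<epsilon> / 2"
    using laurent_approx_continuous[OF \<Phi>, of "\<epsilon> / 2"] \<epsilon> by auto
  define P where "P = laurent_primitive Q"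
  define d where "d = laurent_residue Q"
  have d: "norm d \<le> \<epsilon> / 2"
    unfolding d_def by (rule norm_laurent_residue_le[OF f D Q])
  define L where "L = (f 1 - laurent P 1, 0) # P"
  define h where "h w = f w - laurent L w" for w
  have "((\<lambda>t. f (cis t) - (f 1 - laurent P 1) - laurent P (cis t)) has_vector_derivative
      circle_deriv f t - 0 - (\<i> * cis t * laurent Q (cis t) - \<i> * d)) (at t)" for t
    unfolding P_def d_def
    by (intro has_vector_derivative_diff C1_circle_has_vector_derivative[OF f]
        has_vector_derivative_const has_vector_derivative_laurent_primitive)
  then have "((\<lambda>t. h (cis t)) has_vector_derivative
      \<i> * cis t * (\<Phi> (cis t) - laurent Q (cis t)) + \<i> * d) (at t)" for t
    by (simp add: h_def L_def D algebra_simps)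
  then have Dh: "circle_deriv h t = \<i> * cis t * (\<Phi> (cis t) - laurent Q (cis t)) + \<i> * d" for t
    unfolding circle_deriv_def[of h] by (rule vector_derivative_at)
  have Dh_bound: "norm (circle_deriv h t) \<le> \<epsilon>" for t
    using norm_triangle_ineq[of "\<i> * cis t * (\<Phi> (cis t) - laurent Q (cis t))" "\<i> * d"] Q[of "cis t"] d
    by (simp add: Dh norm_mult)
  have C1h: "C1_circle h"
    using C1_circle_linear[OF f C1_circle_laurent, of 1 "-1" L] by (simp add: h_def[abs_def])
  show ?thesis
  proof (rule that[of L])
    fix w :: complex
    assume w: "w \<in> unit_circle"
    have "h 1 = 0"
      by (simp add: h_def L_def)
    then have "norm (h w) \<le> pi * \<epsilon>"
      by (rule norm_le_of_circle_deriv_bound[OF C1h _ Dh_bound w])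
    also have "\<dots> \<le> 4 * \<epsilon>"
      using pi_less_4 \<epsilon> by simp
    finally show "norm (f w - laurent L w) \<le> 4 * \<epsilon>"
      by (simp add: h_def)
  next
    show "norm (circle_deriv (\<lambda>w. f w - laurent L w) t) \<le> \<epsilon>" for t
      using Dh_bound[of t] by (simp add: h_def[abs_def])
  qed
qed

lemma C1_circle_laurent_approx_seq:
  assumes f: "C1_circle f"
  obtains L where "\<And>k w. w \<in> unit_circle \<Longrightarrow> norm (f w - laurent (L k) w) \<le> 4 * (1 / 2) ^ k"
    and "\<And>k t. norm (circle_deriv (\<lambda>w. f w - laurent (L k) w) t) \<le> (1 / 2) ^ k"
proof -
  have "\<exists>L. (\<forall>w\<in>unit_circle. norm (f w - laurent L w) \<le> 4 * (1 / 2) ^ k)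
      \<and> (\<forall>t. norm (circle_deriv (\<lambda>w. f w - laurent L w) t) \<le> (1 / 2) ^ k)" for k :: nat
  proof (rule C1_circle_laurent_approx[OF f])
    show "0 < (1 / 2 :: real) ^ k"
      by simp
  qed blast
  then show ?thesis
    using that by metis
qed

section \<open>Operators intertwining \<open>U\<^sub>\<alpha>\<close> with multiplication by \<open>z\<close>\<close>

locale intertwining_unitary =
  fixes \<mu> \<mu>\<alpha> :: "complex measure" and \<alpha> :: complex
    and V :: "(complex \<Rightarrow> complex) \<Rightarrow> (complex \<Rightarrow> complex)"
  assumes \<mu>: "circle_measure \<mu>" and \<alpha>: "norm \<alpha> = 1" and \<mu>\<alpha>: "circle_measure \<mu>\<alpha>"
    and V_unitary: "unitary_L2 \<mu> \<mu>\<alpha> V"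
    and V_intertw: "\<And>g. L2 \<mu> g \<Longrightarrow> AE z in \<mu>\<alpha>. V (U_alpha \<mu> \<alpha> g) z = z * V g z"
    and V_one: "AE z in \<mu>\<alpha>. V (\<lambda>_. 1) z = 1"
begin

definition V_formula :: "(complex \<Rightarrow> complex) \<Rightarrow> complex \<Rightarrow> complex" where
  "V_formula f z = f z + (1 - \<alpha>) * (LINT \<xi>|\<mu>. dq f z \<xi>)"

definition V_formula_holds :: "(complex \<Rightarrow> complex) \<Rightarrow> bool" where
  "V_formula_holds f \<longleftrightarrow> (AE z in \<mu>\<alpha>. V f z = V_formula f z)"

lemma integrable_dq: "C1_circle f \<Longrightarrow> z \<in> unit_circle \<Longrightarrow> integrable \<mu> (dq f z)"
  by (rule circle_measure_integrable_continuous[OF \<mu> continuous_on_dq])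

lemma V_formula_cong:
  assumes "C1_circle f" "C1_circle g" "\<And>x. x \<in> unit_circle \<Longrightarrow> f x = g x" "z \<in> unit_circle"
  shows "V_formula f z = V_formula g z"
  unfolding V_formula_def using assms
  by (auto intro!: Bochner_Integration.integral_cong dq_cong simp: circle_measure_space[OF \<mu>])

lemma V_formula_linear:
  assumes f: "C1_circle f" and g: "C1_circle g" and z: "z \<in> unit_circle"
  shows "V_formula (\<lambda>x. a * f x + b * g x) z = a * V_formula f z + b * V_formula g z"
  using integrable_dq[OF f z] integrable_dq[OF g z]
  by (simp add: V_formula_def dq_linear[OF f g z] algebra_simps)

lemma V_formula_mult_ident:
  assumes h: "C1_circle h" and z: "z \<in> unit_circle"
  shows "V_formula (\<lambda>x. x * h x) z = z * V_formula h z + (1 - \<alpha>) * (LINT \<zeta>|\<mu>. h \<zeta> * \<zeta>)"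
proof -
  have "integrable \<mu> (\<lambda>\<xi>. h \<xi> * \<xi>)"
    using C1_circle_continuous_on[OF h]
    by (intro circle_measure_integrable_continuous[OF \<mu>] continuous_intros)
  moreover have "(LINT \<xi>|\<mu>. dq (\<lambda>x. x * h x) z \<xi>) = (LINT \<xi>|\<mu>. z * dq h z \<xi> + h \<xi> * \<xi>)"
    by (intro Bochner_Integration.integral_cong)
      (simp_all add: circle_measure_space[OF \<mu>] dq_mult_ident[OF h z] mult.commute)
  ultimately show ?thesis
    using integrable_dq[OF h z] by (simp add: V_formula_def algebra_simps)
qed

lemma norm_V_formula_le:
  assumes h: "C1_circle h" and B: "\<And>t. norm (circle_deriv h t) \<le> B"
    and C: "\<And>w. w \<in> unit_circle \<Longrightarrow> norm (h w) \<le> C" and z: "z \<in> unit_circle"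
  shows "norm (V_formula h z) \<le> C + 6 * B"
proof -
  interpret prob_space \<mu>
    using \<mu> by (simp add: circle_measure_def)
  have "norm (LINT \<xi>|\<mu>. dq h z \<xi>) \<le> (LINT \<xi>|\<mu>. norm (dq h z \<xi>))"
    by (rule integral_norm_bound)
  also have "\<dots> \<le> 3 * B"
    using integrable_dq[OF h z] norm_dq_le[OF h B z]
    by (intro integral_le_const integrable_norm AE_I2) (auto simp: circle_measure_space[OF \<mu>])
  finally have "norm (LINT \<xi>|\<mu>. dq h z \<xi>) \<le> 3 * B" .
  moreover have "norm (1 - \<alpha>) \<le> 2"
    using norm_triangle_ineq4[of 1 \<alpha>] \<alpha> by simp
  ultimately have "norm ((1 - \<alpha>) * (LINT \<xi>|\<mu>. dq h z \<xi>)) \<le> 2 * (3 * B)"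
    unfolding norm_mult by (intro mult_mono) auto
  then show ?thesis
    using C[OF z] norm_triangle_ineq[of "h z" "(1 - \<alpha>) * (LINT \<xi>|\<mu>. dq h z \<xi>)"]
    by (simp add: V_formula_def)
qed

text \<open>Apply \<open>V\<close> to \<open>\<xi> h = U\<^sub>\<alpha> h + (1 - \<alpha>) (h, b\<^sub>1) 1\<close>.\<close>
lemma V_mult_ident:
  assumes h: "C1_circle h"
  shows "AE z in \<mu>\<alpha>. V (\<lambda>x. x * h x) z = z * V h z + (1 - \<alpha>) * (LINT \<zeta>|\<mu>. h \<zeta> * \<zeta>)"
proof -
  define c where "c = (LINT \<zeta>|\<mu>. h \<zeta> * \<zeta>)"
  have L2U: "L2 \<mu> (U_alpha \<mu> \<alpha> h)"
    using C1_circle_continuous_on[OF h]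
    unfolding U_alpha_def by (intro L2_continuous[OF \<mu>] continuous_intros)
  have L21: "L2 \<mu> (\<lambda>_. 1)"
    by (rule L2_continuous[OF \<mu>]) simp
  have "(\<lambda>x. x * h x) = (\<lambda>x. 1 * U_alpha \<mu> \<alpha> h x + ((1 - \<alpha>) * c) * 1)"
    by (simp add: U_alpha_def c_def fun_eq_iff algebra_simps)
  moreover have "AE z in \<mu>\<alpha>. V (\<lambda>x. 1 * U_alpha \<mu> \<alpha> h x + ((1 - \<alpha>) * c) * 1) z = z * V h z + (1 - \<alpha>) * c"
    using unitary_L2_linear[OF V_unitary L2U L21, of 1 "(1 - \<alpha>) * c"]
      V_intertw[OF L2_C1_circle[OF \<mu> h]] V_one
    by eventually_elim simp
  ultimately show ?thesis
    by (simp add: c_def)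
qed

lemma V_formula_holds_cong:
  assumes f: "C1_circle f" and g: "C1_circle g" and "V_formula_holds f"
    and fg: "\<And>x. x \<in> unit_circle \<Longrightarrow> f x = g x"
  shows "V_formula_holds g"
proof -
  have "AE z in \<mu>\<alpha>. V f z = V g z"
    by (rule unitary_L2_cong[OF V_unitary \<mu> L2_C1_circle[OF \<mu> f] L2_C1_circle[OF \<mu> g] fg])
  with \<open>V_formula_holds f\<close> AE_circle_measure_unit_circle[OF \<mu>\<alpha>] show ?thesis
    unfolding V_formula_holds_def by eventually_elim (use V_formula_cong[OF f g fg] in auto)
qed

lemma V_formula_holds_one: "V_formula_holds (\<lambda>_. 1)"
  using V_one AE_circle_measure_unit_circle[OF \<mu>\<alpha>] unfolding V_formula_holds_def
  by eventually_elim (simp add: V_formula_def dq_const)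

lemma V_formula_holds_linear:
  assumes f: "C1_circle f" and g: "C1_circle g" and "V_formula_holds f" "V_formula_holds g"
  shows "V_formula_holds (\<lambda>x. a * f x + b * g x)"
  using unitary_L2_linear[OF V_unitary L2_C1_circle[OF \<mu> f] L2_C1_circle[OF \<mu> g], of a b]
    assms(3,4) AE_circle_measure_unit_circle[OF \<mu>\<alpha>]
  unfolding V_formula_holds_def
  by eventually_elim (simp add: V_formula_linear[OF f g])

lemma V_formula_holds_mult_ident_iff:
  assumes h: "C1_circle h"
  shows "V_formula_holds (\<lambda>x. x * h x) \<longleftrightarrow> V_formula_holds h"
proof -
  have "AE z in \<mu>\<alpha>. V (\<lambda>x. x * h x) z = V_formula (\<lambda>x. x * h x) z \<longleftrightarrow> V h z = V_formula h z"
    using V_mult_ident[OF h] AE_circle_measure_unit_circle[OF \<mu>\<alpha>]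
    by eventually_elim (auto simp: V_formula_mult_ident[OF h])
  then show ?thesis
    unfolding V_formula_holds_def by (rule eventually_subst)
qed

lemma V_formula_holds_powi: "V_formula_holds (\<lambda>x. x powi n)"
proof -
  have powi_succ: "x powi (i + 1) = x * x powi i" if "x \<in> unit_circle" for x :: complex and i
    using that by (subst power_int_add) auto
  show ?thesis
  proof (induction n rule: int_induct[where k = 0])
    case base
    then show ?case
      using V_formula_holds_one by simp
  next
    case (step1 i)
    from step1.IH have "V_formula_holds (\<lambda>x. x * x powi i)"
      by (simp add: V_formula_holds_mult_ident_iff[OF C1_circle_powi])
    then show ?case
      by (rule V_formula_holds_cong[OF C1_circle_mult_ident[OF C1_circle_powi] C1_circle_powi])
        (simp add: powi_succ)
  next
    case (step2 i)
    from step2.IH have "V_formula_holds (\<lambda>x. x * x powi (i - 1))"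
      by (rule V_formula_holds_cong[OF C1_circle_powi C1_circle_mult_ident[OF C1_circle_powi]])
        (use powi_succ[of _ "i - 1"] in simp)
    then show ?case
      by (simp add: V_formula_holds_mult_ident_iff[OF C1_circle_powi])
  qed
qed

lemma V_formula_holds_laurent: "V_formula_holds (laurent L)"
proof (induction L)
  case Nil
  then show ?case
    using V_formula_holds_linear[OF C1_circle_const C1_circle_const V_formula_holds_one
        V_formula_holds_one, of 0 0]
    by (simp add: laurent_def)
next
  case (Cons p L)
  obtain c n where p: "p = (c, n)"
    by (cases p)
  show ?case
    using V_formula_holds_linear[OF C1_circle_powi[of n] C1_circle_laurent V_formula_holds_powi[of n] Cons.IH,
        where a = c and b = 1]
    by (simp add: p)
qed

lemma norm_V_minus_V_formula_le:
  assumes f: "C1_circle f"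
    and C: "\<And>w. w \<in> unit_circle \<Longrightarrow> norm (f w - laurent L w) \<le> C"
    and B: "\<And>t. norm (circle_deriv (\<lambda>w. f w - laurent L w) t) \<le> B"
  shows "AE z in \<mu>\<alpha>. norm (V f z - V_formula f z) \<le> norm (V (\<lambda>w. f w - laurent L w) z) + C + 6 * B"
proof -
  define h where "h w = f w - laurent L w" for w
  have h: "C1_circle h"
    using C1_circle_linear[OF f C1_circle_laurent, of 1 "-1" L] by (simp add: h_def[abs_def])
  have f_eq: "f = (\<lambda>w. laurent L w + h w)"
    by (simp add: h_def)
  have "AE z in \<mu>\<alpha>. V f z = 1 * V (laurent L) z + 1 * V h z"
    using unitary_L2_linear[OF V_unitary L2_C1_circle[OF \<mu> C1_circle_laurent[of L]]
        L2_C1_circle[OF \<mu> h], where a = 1 and b = 1]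
    by (subst f_eq) simp
  with V_formula_holds_laurent[of L] AE_circle_measure_unit_circle[OF \<mu>\<alpha>]
  show ?thesis
    unfolding V_formula_holds_def h_def[symmetric]
  proof eventually_elim
    case (elim z)
    have "V_formula f z = V_formula (laurent L) z + V_formula h z"
      using V_formula_linear[OF C1_circle_laurent[of L] h elim(2), where a = 1 and b = 1]
      by (simp add: f_eq)
    then have "V f z - V_formula f z = V h z - V_formula h z"
      using elim(1,3) by simp
    also have "norm \<dots> \<le> norm (V h z) + (C + 6 * B)"
      using norm_V_formula_le[OF h B[folded h_def] C[folded h_def] elim(2)] norm_triangle_ineq4[of "V h z" "V_formula h z"]
      by simp
    finally show ?case
      by simp
  qed
qed

lemma AE_tendsto_V_zero:
  assumes h: "\<And>k. L2 \<mu> (h k)" and bound: "\<And>k w. w \<in> unit_circle \<Longrightarrow> norm (h k w) \<le> c k"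
    and summable: "summable (\<lambda>k. (c k)\<^sup>2)"
  shows "AE z in \<mu>\<alpha>. (\<lambda>k. V (h k) z) \<longlonglongrightarrow> 0"
proof (rule AE_tendsto_zero_if_summable_integral_norm_square)
  show "V (h k) \<in> borel_measurable \<mu>\<alpha>" "integrable \<mu>\<alpha> (\<lambda>x. (norm (V (h k) x))\<^sup>2)" for k
    using unitary_L2_L2[OF V_unitary h] by (simp_all add: L2_def)
  interpret prob_space \<mu>
    using \<mu> by (simp add: circle_measure_def)
  have "(LINT x|\<mu>. (norm (h k x))\<^sup>2) \<le> (c k)\<^sup>2" for k
    using h[of k] bound[of _ k]
    by (intro integral_le_const AE_I2 power_mono) (auto simp: L2_def circle_measure_space[OF \<mu>])
  then show "summable (\<lambda>k. LINT x|\<mu>\<alpha>. (norm (V (h k) x))\<^sup>2)"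
    by (intro summable_comparison_test[OF _ summable])
      (simp add: unitary_L2_integral_norm_square[OF V_unitary h])
qed

theorem V_formula_holds_C1:
  assumes f: "C1_circle f"
  shows "V_formula_holds f"
proof -
  define \<epsilon> where "\<epsilon> k = (1 / 2 :: real) ^ k" for k :: nat
  obtain L where C: "\<And>k w. w \<in> unit_circle \<Longrightarrow> norm (f w - laurent (L k) w) \<le> 4 * \<epsilon> k"
    and B: "\<And>k t. norm (circle_deriv (\<lambda>w. f w - laurent (L k) w) t) \<le> \<epsilon> k"
    using C1_circle_laurent_approx_seq[OF f] unfolding \<epsilon>_def by blast
  define h where "h k w = f w - laurent (L k) w" for k w
  have "\<epsilon> \<longlonglongrightarrow> 0"
    unfolding \<epsilon>_def[abs_def] by (rule LIMSEQ_power_zero) simp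
  then have bound_tendsto: "(\<lambda>k. norm (V (h k) z) + 10 * \<epsilon> k) \<longlonglongrightarrow> 0"
    if "(\<lambda>k. V (h k) z) \<longlonglongrightarrow> 0" for z
    using tendsto_add[OF tendsto_norm_zero[OF that] tendsto_mult_right_zero] by simp
  have "AE z in \<mu>\<alpha>. \<forall>k. norm (V f z - V_formula f z) \<le> norm (V (h k) z) + 10 * \<epsilon> k"
    unfolding AE_all_countable
    using norm_V_minus_V_formula_le[OF f C B] by (simp add: h_def[abs_def] add.commute)
  moreover have "AE z in \<mu>\<alpha>. (\<lambda>k. V (h k) z) \<longlonglongrightarrow> 0"
  proof (rule AE_tendsto_V_zero)
    show "L2 \<mu> (h k)" for k
      using C1_circle_linear[OF f C1_circle_laurent, of 1 "-1" "L k"]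
      by (intro L2_C1_circle[OF \<mu>]) (simp add: h_def[abs_def])
    show "norm (h k w) \<le> 4 * \<epsilon> k" if "w \<in> unit_circle" for k w
      using C[OF that] by (simp add: h_def)
    have "(\<lambda>k. (4 * \<epsilon> k)\<^sup>2) = (\<lambda>k. 16 * (1 / 4) ^ k)"
      by (simp add: \<epsilon>_def power2_eq_square power_mult_distrib[symmetric])
    then show "summable (\<lambda>k. (4 * \<epsilon> k)\<^sup>2)"
      by (simp add: summable_mult summable_geometric)
  qed
  ultimately show ?thesis
    unfolding V_formula_holds_def
  proof eventually_elim
    case (elim z)
    have "norm (V f z - V_formula f z) \<le> 0"
      by (rule LIMSEQ_le_const[OF bound_tendsto[OF elim(2)]]) (use elim(1) in blast)
    then show ?case
      by simp
  qed
qed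

end

theorem theorem2p6:
  fixes \<mu> \<mu>\<alpha> :: "complex measure" and \<alpha> :: complex
    and V :: "(complex \<Rightarrow> complex) \<Rightarrow> (complex \<Rightarrow> complex)"
    and f :: "complex \<Rightarrow> complex"
  assumes \<mu>: "circle_measure \<mu>"
    and \<alpha>: "norm \<alpha> = 1"
    and \<mu>\<alpha>: "circle_measure \<mu>\<alpha>"
    and spectral: "\<And>n::nat. (LINT z|\<mu>\<alpha>. z ^ n) = L2_inner \<mu> ((U_alpha \<mu> \<alpha> ^^ n) (\<lambda>_. 1)) (\<lambda>_. 1)"
    and V_unitary: "unitary_L2 \<mu> \<mu>\<alpha> V"
    and V_intertw: "\<And>g. L2 \<mu> g \<Longrightarrow> AE z in \<mu>\<alpha>. V (U_alpha \<mu> \<alpha> g) z = z * V g z"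
    and V_one: "AE z in \<mu>\<alpha>. V (\<lambda>_. 1) z = 1"
    and f: "C1_circle f"
  shows "AE z in \<mu>\<alpha>. V f z = f z + (1 - \<alpha>) * (LINT \<xi>|\<mu>. dq f z \<xi>)"
proof -
  interpret intertwining_unitary \<mu> \<mu>\<alpha> \<alpha> V
    using \<mu> \<alpha> \<mu>\<alpha> V_unitary V_intertw V_one by unfold_locales
  show ?thesis
    using V_formula_holds_C1[OF f] unfolding V_formula_holds_def V_formula_def .
qed

end
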